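(* Let $f:\mathbb{R}^n\to\mathbb{R}$ be bounded below, let $\mathcal{X}\subseteq\mathbb{R}^n$ be a set such that $\min_{\mathbf{x}}\{f(\mathbf{x}) : \mathbf{x}\in\mathcal{X}\}$ has an optimal solution, and let $p_f$ be any probability distribution whose support is $\mathcal{X}$. Let $(G^*, D^*_{G^*})$ be the globally optimal generator/discriminator pair for a GAN trained on $\mathbf{x}\sim p_f$, so that $D^*_{G^*}(\mathbf{x}) = \tfrac12$ if $p_f(\mathbf{x})>0$ and $D^*_{G^*}(\mathbf{x})=0$ if $p_f(\mathbf{x})=0$. Then for any $\lambda>0$ and any $\delta$, the problems $$\min_{\mathbf{x}}\Big\{ f(\mathbf{x}) + \lambda\big(\delta - \log D^*_{G^*}(\mathbf{x})\big)\Big\}\quad\text{and}\quad \min_{\mathbf{x}}\{f(\mathbf{x}) : \mathbf{x}\in\mathcal{X}\}$$ have the same optimal solutions.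
   Context: A GAN consists of a generator $G$ (mapping latent samples $\mathbf{z}\sim p_z$ to outputs with distribution $p_g$) and a discriminator $D$ with values in $[0,1]$, trained on the min–max loss $\min_G\max_D\{\mathbb{E}_{p_f}[\log D(\mathbf{x})] + \mathbb{E}_{p_z}[\log(1-D(G(\mathbf{z})))]\}$; a globally optimal pair solves this min–max problem. The convention $-\log 0 = +\infty$ is used. *)

theory Defs
  imports "HOL-Analysis.Analysis"
begin

definition neglog :: "real \<Rightarrow> ereal" where
  "neglog t = (if t = 0 then \<infinity> else ereal (- ln t))"

definition opt_disc :: "('a \<Rightarrow> real) \<Rightarrow> 'a \<Rightarrow> real" where
  "opt_disc p x = (if p x > 0 then 1/2 else 0)"

definition gan_obj :: "('a \<Rightarrow> real) \<Rightarrow> real \<Rightarrow> real \<Rightarrow> ('a \<Rightarrow> real) \<Rightarrow> 'a \<Rightarrow> ereal" where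
  "gan_obj f lam del D x = ereal (f x) + ereal lam * (ereal del + neglog (D x))"

end

theory Submission
  imports Defs
begin

text \<open>At the optimal discriminator the penalty term equals \<open>\<lambda>(\<delta> + ln 2)\<close> on the support
  \<open>X\<close> of \<open>p\<^sub>f\<close> and \<open>+\<infinity>\<close> off it. The penalized objective is therefore \<open>f\<close> shifted by a
  constant on \<open>X\<close> and infinite outside, i.e. an exact penalty for the constraint \<open>x \<in> X\<close>;
  as soon as \<open>X\<close> is nonempty, both problems have the same minimizers.\<close>

lemma gan_obj_opt_disc:
  assumes "lam > 0"
  shows "gan_obj f lam del (opt_disc p) x
       = (if p x > 0 then ereal (f x + lam * (del + ln 2)) else \<infinity>)"
  using assms by (simp add: gan_obj_def opt_disc_def neglog_def ln_div)

lemma is_arg_min_exact_penalty: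
  fixes g :: "'a \<Rightarrow> real" and F :: "'a \<Rightarrow> ereal"
  assumes F: "\<And>x. F x = (if x \<in> X then ereal (g x + c) else \<infinity>)"
    and "X \<noteq> {}"
  shows "is_arg_min F (\<lambda>_. True) x \<longleftrightarrow> is_arg_min g (\<lambda>x. x \<in> X) x"
proof
  assume min_F: "is_arg_min F (\<lambda>_. True) x"
  obtain y where "y \<in> X" using \<open>X \<noteq> {}\<close> by blast
  then have "F y < \<infinity>" by (simp add: F)
  then have "x \<in> X"
    using min_F by (metis F is_arg_min_def not_le top.extremum)
  moreover have "g x \<le> g y" if "y \<in> X" for y
  proof -
    have "\<not> F y < F x"
      using min_F by (simp add: is_arg_min_def)
    then show ?thesis
      using \<open>x \<in> X\<close> that by (simp add: F)
  qed
  ultimately show "is_arg_min g (\<lambda>x. x \<in> X) x"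
    by (simp add: is_arg_min_def not_less)
next
  assume "is_arg_min g (\<lambda>x. x \<in> X) x"
  then show "is_arg_min F (\<lambda>_. True) x"
    by (auto simp: is_arg_min_def F split: if_splits)
qed

theorem corollary1:
  fixes f :: "real ^ 'n \<Rightarrow> real" and X :: "(real ^ 'n) set"
    and p :: "real ^ 'n \<Rightarrow> real" and D :: "real ^ 'n \<Rightarrow> real"
    and lam del :: real
  assumes "bdd_below (range f)"
    and "\<exists>x. is_arg_min f (\<lambda>x. x \<in> X) x"
    and "\<forall>x. p x \<ge> 0"
    and "{x. p x > 0} = X"
    and "D = opt_disc p"
    and "lam > 0"
  shows "{x. is_arg_min (gan_obj f lam del D) (\<lambda>_. True) x}
       = {x. is_arg_min f (\<lambda>x. x \<in> X) x}"
proof -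
  have obj: "gan_obj f lam del D x = (if x \<in> X then ereal (f x + lam * (del + ln 2)) else \<infinity>)"
    for x unfolding assms(5) gan_obj_opt_disc[OF \<open>lam > 0\<close>] using assms(4) by auto
  have "X \<noteq> {}"
    using assms(2) by (auto simp: is_arg_min_def)
  then show ?thesis
    using is_arg_min_exact_penalty[OF obj] by blast
qed

end
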